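(* Let $X$ be a topological space. For every irreducible closed subset $C$ of $X$, let $e_C:\mathcal OX\to[0,\infty]$ map every open $U$ to $1$ if $U\cap C\neq\emptyset$ and to $0$ otherwise. Then $e_C$ is a point-continuous valuation. If $C$ is the closure of $\{x\}$ for some point $x$, then $e_C=\delta_x$.
   Context: A non-empty subset $A$ is irreducible if $A\subseteq B\cup C$ with $B,C$ closed implies $A\subseteq B$ or $A\subseteq C$. A valuation is a map $\mathcal OX\to[0,\infty]$ with value $0$ on $\emptyset$, monotone and modular. It is point-continuous if for every open $U$ and real $r$ with $0\le r<\nu(U)$ there is a finite $A\subseteq U$ with $\nu(V)>r$ for every open $V\supseteq A$. $\delta_x$ is the Dirac valuation: $\delta_x(U)=1$ if $x\in U$, else $0$. *)

theory Defs
  imports "HOL-Analysis.Analysis"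
begin

definition irreducible_in :: "'a topology \<Rightarrow> 'a set \<Rightarrow> bool" where
  "irreducible_in T A \<longleftrightarrow> A \<noteq> {} \<and> A \<subseteq> topspace T \<and>
     (\<forall>B C. closedin T B \<longrightarrow> closedin T C \<longrightarrow> A \<subseteq> B \<union> C \<longrightarrow> A \<subseteq> B \<or> A \<subseteq> C)"

text \<open>A valuation: a map from open sets to [0,\<infinity>], zero on the empty set, monotone, modular.
  Only its values on open sets matter.\<close>
definition valuation :: "'a topology \<Rightarrow> ('a set \<Rightarrow> ennreal) \<Rightarrow> bool" where
  "valuation T \<nu> \<longleftrightarrow> \<nu> {} = 0 \<and>
     (\<forall>U V. openin T U \<longrightarrow> openin T V \<longrightarrow> U \<subseteq> V \<longrightarrow> \<nu> U \<le> \<nu> V) \<and>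
     (\<forall>U V. openin T U \<longrightarrow> openin T V \<longrightarrow> \<nu> (U \<union> V) + \<nu> (U \<inter> V) = \<nu> U + \<nu> V)"

definition point_continuous :: "'a topology \<Rightarrow> ('a set \<Rightarrow> ennreal) \<Rightarrow> bool" where
  "point_continuous T \<nu> \<longleftrightarrow>
     (\<forall>U (r::real). openin T U \<longrightarrow> 0 \<le> r \<longrightarrow> ennreal r < \<nu> U \<longrightarrow>
        (\<exists>A. finite A \<and> A \<subseteq> U \<and> (\<forall>V. openin T V \<longrightarrow> A \<subseteq> V \<longrightarrow> ennreal r < \<nu> V)))"

definition dirac_val :: "'a \<Rightarrow> 'a set \<Rightarrow> ennreal" where
  "dirac_val x U = (if x \<in> U then 1 else 0)"

definition e_val :: "'a set \<Rightarrow> 'a set \<Rightarrow> ennreal" where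
  "e_val C U = (if U \<inter> C \<noteq> {} then 1 else 0)"

end

theory Submission
  imports Defs
begin

(* Irreducibility of C says exactly that any two open sets meeting C meet each other inside C
   (pass to complements). Hence the sets U with e_C(U) = 1 form a filter on the open sets, which
   makes e_C modular; point-continuity is witnessed by a single point of U \<inter> C; and an open set
   meets the closure of {x} iff it contains x. *)

lemma irreducible_in_open_Int_nonempty:
  assumes "irreducible_in T C" "openin T U" "openin T V" "U \<inter> C \<noteq> {}" "V \<inter> C \<noteq> {}"
  shows "U \<inter> V \<inter> C \<noteq> {}"
proof
  assume disjoint: "U \<inter> V \<inter> C = {}"
  have "C \<subseteq> topspace T"
    using assms(1) by (simp add: irreducible_in_def)
  then have "C \<subseteq> (topspace T - U) \<union> (topspace T - V)"
    using disjoint by blast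
  moreover have "closedin T (topspace T - U)" "closedin T (topspace T - V)"
    using assms(2,3) by auto
  ultimately have "C \<subseteq> topspace T - U \<or> C \<subseteq> topspace T - V"
    using assms(1) unfolding irreducible_in_def by blast
  then show False
    using assms(4,5) by blast
qed

lemma valuation_e_val:
  assumes "irreducible_in T C"
  shows "valuation T (e_val C)"
  unfolding valuation_def
proof (intro conjI allI impI)
  fix U V
  assume "openin T U" "openin T V" "U \<subseteq> V"
  then show "e_val C U \<le> e_val C V"
    unfolding e_val_def by auto
next
  fix U V
  assume opens: "openin T U" "openin T V"
  show "e_val C (U \<union> V) + e_val C (U \<inter> V) = e_val C U + e_val C V"
  proof (cases "U \<inter> C \<noteq> {} \<and> V \<inter> C \<noteq> {}")
    case True
    then have "U \<inter> V \<inter> C \<noteq> {}"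
      using irreducible_in_open_Int_nonempty[OF assms opens] by blast
    then show ?thesis
      using True unfolding e_val_def by (auto simp: Int_Un_distrib2)
  next
    case False
    then show ?thesis
      unfolding e_val_def by (auto simp: Int_Un_distrib2 Int_assoc)
  qed
qed (simp add: e_val_def)

lemma point_continuous_e_val: "point_continuous T (e_val C)"
  unfolding point_continuous_def
proof (intro allI impI)
  fix U and r :: real
  assume "openin T U" "0 \<le> r" "ennreal r < e_val C U"
  then have r_less_1: "ennreal r < 1" and "U \<inter> C \<noteq> {}"
    unfolding e_val_def by (auto split: if_splits)
  then obtain a where "a \<in> U" "a \<in> C"
    by blast
  then show "\<exists>A. finite A \<and> A \<subseteq> U \<and> (\<forall>V. openin T V \<longrightarrow> A \<subseteq> V \<longrightarrow> ennreal r < e_val C V)"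
    using r_less_1 by (intro exI[of _ "{a}"]) (auto simp: e_val_def)
qed

lemma e_val_closure_of_singleton:
  assumes "openin T U"
  shows "e_val (T closure_of {x}) U = dirac_val x U"
  using openin_Int_closure_of_eq_empty[OF assms, of "{x}"]
  unfolding e_val_def dirac_val_def by auto

theorem lemma4p1:
  fixes T :: "'a topology" and C :: "'a set"
  assumes "closedin T C" and "irreducible_in T C"
  shows "valuation T (e_val C) \<and> point_continuous T (e_val C) \<and>
         (\<forall>x \<in> topspace T. C = T closure_of {x} \<longrightarrow>
            (\<forall>U. openin T U \<longrightarrow> e_val C U = dirac_val x U))"
proof (intro conjI ballI impI allI)
  show "valuation T (e_val C)"
    using assms(2) by (rule valuation_e_val)
  show "point_continuous T (e_val C)"
    by (rule point_continuous_e_val)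
  show "e_val C U = dirac_val x U" if "C = T closure_of {x}" "openin T U" for x U
    using that by (simp add: e_val_closure_of_singleton)
qed

end
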